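(* Let $\beta>0$, let $n$ be a positive integer, $g\in H(\mathbb{D})$, and $I_g^{n,0}f=I^n(fg)$. Then (i) $I_g^{n,0}:\mathcal{B}\to\mathcal{B}^{\beta}$ is bounded if and only if $\sup_{z\in\mathbb{D}}(1-|z|^2)^{n+\beta-1}\log\frac{2}{1-|z|^2}|g(z)|<\infty$; (ii) $I_g^{n,0}:\mathcal{B}\to\mathcal{B}^{\beta}$ is compact if and only if $\lim_{|z|\to1^-}(1-|z|^2)^{n+\beta-1}\log\frac{2}{1-|z|^2}|g(z)|=0$.
   Context: $\mathbb{D}$ is the open unit disc in $\mathbb{C}$ and $H(\mathbb{D})$ the space of analytic functions on $\mathbb{D}$. For $\gamma>0$, $\mathcal{B}^{\gamma}$ is the Banach space of $f\in H(\mathbb{D})$ with $\|f\|_{\mathcal{B}^{\gamma}}=|f(0)|+\sup_{z\in\mathbb{D}}(1-|z|^2)^{\gamma}|f'(z)|<\infty$; $\mathcal{B}=\mathcal{B}^1$ is the Bloch space. $I$ is the integration operator $If(z)=\int_0^z f(\zeta)\,d\zeta$ and $I^n$ its $n$th iterate. An operator is bounded (compact) from $\mathcal{B}$ to $\mathcal{B}^\beta$ if it maps $\mathcal{B}$ into $\mathcal{B}^\beta$ and is bounded (compact) as a linear operator between these Banach spaces. *)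

theory Defs
  imports "HOL-Complex_Analysis.Complex_Analysis"
begin

abbreviation disc :: "complex set" where "disc \<equiv> ball 0 1"

definition bloch :: "real \<Rightarrow> (complex \<Rightarrow> complex) set" where
  "bloch \<gamma> = {f. f holomorphic_on disc \<and>
     bdd_above ((\<lambda>z. (1 - (cmod z)\<^sup>2) powr \<gamma> * cmod (deriv f z)) ` disc)}"

definition bloch_norm :: "real \<Rightarrow> (complex \<Rightarrow> complex) \<Rightarrow> real" where
  "bloch_norm \<gamma> f = cmod (f 0) +
     (SUP z\<in>disc. (1 - (cmod z)\<^sup>2) powr \<gamma> * cmod (deriv f z))"

definition intop :: "(complex \<Rightarrow> complex) \<Rightarrow> (complex \<Rightarrow> complex)" where
  "intop f = (\<lambda>z. contour_integral (linepath 0 z) f)"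

definition bounded_bloch_op :: "real \<Rightarrow> real \<Rightarrow> ((complex \<Rightarrow> complex) \<Rightarrow> (complex \<Rightarrow> complex)) \<Rightarrow> bool" where
  "bounded_bloch_op \<alpha> \<beta> T \<longleftrightarrow> (\<forall>f\<in>bloch \<alpha>. T f \<in> bloch \<beta>) \<and>
     (\<exists>C. \<forall>f\<in>bloch \<alpha>. bloch_norm \<beta> (T f) \<le> C * bloch_norm \<alpha> f)"

text \<open>T is compact from B^alpha to B^beta: it maps B^alpha into B^beta and the image
  of the closed unit ball is relatively compact in B^beta (sequential form).\<close>
definition compact_bloch_op :: "real \<Rightarrow> real \<Rightarrow> ((complex \<Rightarrow> complex) \<Rightarrow> (complex \<Rightarrow> complex)) \<Rightarrow> bool" where
  "compact_bloch_op \<alpha> \<beta> T \<longleftrightarrow> (\<forall>f\<in>bloch \<alpha>. T f \<in> bloch \<beta>) \<and>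
     (\<forall>F :: nat \<Rightarrow> complex \<Rightarrow> complex. (\<forall>k. F k \<in> bloch \<alpha> \<and> bloch_norm \<alpha> (F k) \<le> 1) \<longrightarrow>
        (\<exists>(r :: nat \<Rightarrow> nat) h. strict_mono r \<and> h \<in> bloch \<beta> \<and>
           (\<lambda>k. bloch_norm \<beta> (\<lambda>z. T (F (r k)) z - h z)) \<longlonglongrightarrow> 0))"

end

theory Submission
  imports Defs
begin

text \<open>Integration lowers the exponent of the weight \<open>1 - \<bar>z\<bar>\<^sup>2\<close> by one, and Cauchy's
  estimate on discs of radius \<open>(1 - \<bar>z\<bar>) / 2\<close> raises it back, so \<open>I\<^sup>n H\<close> lies in
  \<open>\<B>\<^sup>\<beta>\<close>, with comparable norm, exactly when \<open>(1 - \<bar>z\<bar>\<^sup>2)\<^sup>n\<^sup>+\<^sup>\<beta>\<^sup>-\<^sup>1 \<bar>H z\<bar>\<close> is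
  bounded. For \<open>H = f g\<close> the growth bound \<open>\<bar>f z\<bar> \<le> \<parallel>f\<parallel> log (2 / (1 - \<bar>z\<bar>\<^sup>2)) / log 2\<close>
  of Bloch functions gives sufficiency in (i); necessity follows by testing on normalised
  squares of \<open>log (2 / (1 - cnj a z))\<close>, which lie in the unit ball of \<open>\<B>\<close> and attain
  this growth at \<open>a\<close>.

  For (ii), Montel's theorem extracts locally uniformly convergent subsequences from the unit
  ball of \<open>\<B>\<close>; local uniform convergence controls the weighted norm on compact subdiscs and
  the vanishing of the symbol controls it near the circle. Conversely the test functions tend
  to zero locally uniformly as \<open>\<bar>a\<bar> \<rightarrow> 1\<close>, so compactness forces their images to a
  norm-null subsequence, against the lower bound given by their values at \<open>a\<close>.\<close>

section \<open>The integration operator\<close>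

lemma disc_weight_pos: "z \<in> disc \<Longrightarrow> 0 < 1 - (cmod z)\<^sup>2"
  by (simp add: power_less_one_iff)

lemma closed_segment_0_subset_disc: "z \<in> disc \<Longrightarrow> closed_segment 0 z \<subseteq> disc"
  by (simp add: closed_segment_subset convex_ball)

lemma has_field_derivative_intop:
  assumes "f holomorphic_on disc" "z \<in> disc"
  shows "(intop f has_field_derivative f z) (at z)"
proof -
  obtain G where G: "\<And>x. x \<in> disc \<Longrightarrow> (G has_field_derivative f x) (at x within disc)"
    using holomorphic_convex_primitive'[OF convex_ball open_ball assms(1)] by blast
  have eq: "intop f w = G w - G 0" if "w \<in> disc" for w
  proof -
    have "(f has_contour_integral G w - G 0) (linepath 0 w)"
      using contour_integral_primitive[OF G, of "linepath 0 w"] closed_segment_0_subset_disc[OF that]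
      by simp
    then show ?thesis unfolding intop_def using contour_integral_unique by blast
  qed
  have "((\<lambda>w. G w - G 0) has_field_derivative f z) (at z)"
    using G[OF assms(2)] unfolding at_within_open[OF assms(2) open_ball]
    by (auto intro!: derivative_eq_intros)
  then show ?thesis
    by (rule has_field_derivative_transform_within_open[OF _ open_ball assms(2)]) (simp add: eq)
qed

lemma holomorphic_on_intop:
  assumes "f holomorphic_on disc"
  shows "intop f holomorphic_on disc"
  unfolding holomorphic_on_open[OF open_ball] using has_field_derivative_intop[OF assms] by blast

lemma deriv_intop: "f holomorphic_on disc \<Longrightarrow> z \<in> disc \<Longrightarrow> deriv (intop f) z = f z"
  using has_field_derivative_intop DERIV_imp_deriv by blast

lemma intop_0 [simp]: "intop f 0 = 0"
  by (simp add: intop_def)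

lemma holomorphic_on_intop_funpow: "f holomorphic_on disc \<Longrightarrow> (intop ^^ k) f holomorphic_on disc"
  by (induction k) (auto intro: holomorphic_on_intop)

lemma intop_funpow_0: "k > 0 \<Longrightarrow> (intop ^^ k) f 0 = 0"
  by (cases k) auto

lemma deriv_intop_funpow:
  "f holomorphic_on disc \<Longrightarrow> z \<in> disc \<Longrightarrow> k > 0 \<Longrightarrow>
   deriv ((intop ^^ k) f) z = (intop ^^ (k - 1)) f z"
  by (cases k) (auto simp: deriv_intop holomorphic_on_intop_funpow)

lemma intop_cong:
  assumes "\<And>w. w \<in> disc \<Longrightarrow> f w = h w" "z \<in> disc"
  shows "intop f z = intop h z"
  unfolding intop_def using assms closed_segment_0_subset_disc[OF assms(2)]
  by (intro contour_integral_eq) auto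

lemma intop_diff:
  assumes "f holomorphic_on disc" "h holomorphic_on disc" "z \<in> disc"
  shows "intop (\<lambda>w. f w - h w) z = intop f z - intop h z"
proof -
  have "f contour_integrable_on linepath 0 z" "h contour_integrable_on linepath 0 z"
    using contour_integrable_continuous_linepath holomorphic_on_imp_continuous_on
      continuous_on_subset assms closed_segment_0_subset_disc by blast+
  then show ?thesis unfolding intop_def by (rule contour_integral_diff)
qed

lemma intop_funpow_diff:
  assumes "f holomorphic_on disc" "h holomorphic_on disc" "z \<in> disc"
  shows "(intop ^^ k) (\<lambda>w. f w - h w) z = (intop ^^ k) f z - (intop ^^ k) h z"
  using assms(3)
proof (induction k arbitrary: z)
  case 0 then show ?case by simp
next
  case (Suc k)
  have "(intop ^^ Suc k) (\<lambda>w. f w - h w) z = intop (\<lambda>w. (intop ^^ k) f w - (intop ^^ k) h w) z"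
    unfolding funpow.simps comp_def by (rule intop_cong[OF Suc.IH Suc.prems])
  also have "\<dots> = (intop ^^ Suc k) f z - (intop ^^ Suc k) h z"
    unfolding funpow.simps comp_def
    by (rule intop_diff[OF holomorphic_on_intop_funpow[OF assms(1)]
          holomorphic_on_intop_funpow[OF assms(2)] Suc.prems])
  finally show ?case .
qed

section \<open>Weighted estimates for iterated integrals\<close>

lemma radial_point_weight:
  assumes "0 \<le> t" "t \<le> 1" "z \<in> disc"
  shows "of_real t * z \<in> disc" "0 < 1 - t * cmod z"
    and "1 - t * cmod z \<le> 1 - (cmod (of_real t * z))\<^sup>2"
proof -
  have norm_tz: "cmod (of_real t * z) = t * cmod z"
    using assms(1) by (simp add: norm_mult)
  have "t * cmod z \<le> cmod z"
    using assms(1,2) by (simp add: mult_left_le_one_le)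
  then have "t * cmod z < 1"
    using assms(3) by simp
  then show "of_real t * z \<in> disc" "0 < 1 - t * cmod z"
    using norm_tz by auto
  have "(t * cmod z)\<^sup>2 \<le> t * cmod z"
    using \<open>t * cmod z < 1\<close> assms(1) by (simp add: power2_eq_square mult_left_le_one_le)
  then show "1 - t * cmod z \<le> 1 - (cmod (of_real t * z))\<^sup>2"
    using norm_tz by simp
qed

lemma norm_diff_le_radial_majorant:
  assumes holo: "f holomorphic_on disc" and z: "z \<in> disc"
    and \<phi>_cont: "continuous_on {0..1} \<phi>"
    and \<phi>_deriv: "\<And>t. 0 < t \<Longrightarrow> t < 1 \<Longrightarrow> (\<phi> has_real_derivative \<phi>' t) (at t)"
    and majorant: "\<And>t. 0 < t \<Longrightarrow> t < 1 \<Longrightarrow> cmod z * cmod (deriv f (of_real t * z)) \<le> \<phi>' t"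
  shows "cmod (f z - f 0) \<le> \<phi> 1 - \<phi> 0"
proof -
  define p where "p = (\<lambda>t::real. f (of_real t * z))"
  have in_disc: "of_real t * z \<in> disc" if "t \<in> {0..1}" for t
    using radial_point_weight(1)[OF _ _ z] that by simp
  have "norm (p 1 - p 0) \<le> \<phi> 1 - \<phi> 0"
  proof (rule differentiable_bound_general[of 0 1 p \<phi> "\<lambda>t. z * deriv f (of_real t * z)" \<phi>'])
    show "continuous_on {0..1} p"
      unfolding p_def
      by (rule continuous_on_compose2[OF holomorphic_on_imp_continuous_on[OF holo]])
         (auto intro!: continuous_intros in_disc)
    fix t :: real assume t: "0 < t" "t < 1"
    have "((\<lambda>t. of_real t * z) has_vector_derivative z) (at t)"
      by (auto intro!: derivative_eq_intros simp: has_vector_derivative_def scaleR_conv_of_real)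
    moreover have "(f has_field_derivative deriv f (of_real t * z)) (at (of_real t * z))"
      using t in_disc by (intro holomorphic_derivI[OF holo open_ball]) auto
    ultimately show "(p has_vector_derivative z * deriv f (of_real t * z)) (at t)"
      using field_vector_diff_chain_at by (fastforce simp: p_def comp_def)
    show "(\<phi> has_vector_derivative \<phi>' t) (at t)"
      using \<phi>_deriv[OF t] by (simp add: has_real_derivative_iff_has_vector_derivative)
    show "norm (z * deriv f (of_real t * z)) \<le> \<phi>' t"
      using majorant[OF t] by (simp add: norm_mult)
  qed (use \<phi>_cont in simp_all)
  then show ?thesis by (simp add: p_def)
qed

lemma disc_weight_near:
  assumes z: "z \<in> disc" and w: "cmod (z - w) \<le> (1 - cmod z) / 2"
  shows "w \<in> disc" "(1 - (cmod z)\<^sup>2) / 4 \<le> 1 - (cmod w)\<^sup>2"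
proof -
  have "cmod w \<le> cmod z + (1 - cmod z) / 2"
    using w norm_triangle_ineq2[of w z] norm_minus_commute[of z w] by linarith
  then show w_disc: "w \<in> disc" using z by (simp add: field_simps)
  have "(cmod w)\<^sup>2 \<le> cmod w"
    using w_disc by (simp add: power2_eq_square mult_left_le_one_le)
  moreover have "1 - (cmod z)\<^sup>2 \<le> 2 * (1 - cmod z)"
    using zero_le_power2[of "1 - cmod z"] by (simp add: power2_eq_square algebra_simps)
  ultimately show "(1 - (cmod z)\<^sup>2) / 4 \<le> 1 - (cmod w)\<^sup>2"
    using \<open>cmod w \<le> cmod z + (1 - cmod z) / 2\<close> by (simp add: field_simps)
qed

text \<open>Cauchy's estimate on the circle of radius \<open>(1 - \<bar>z\<bar>) / 2\<close> about \<open>z\<close>, on which the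
  weight is comparable to its value at \<open>z\<close>.\<close>

lemma weighted_deriv_le:
  assumes holo: "H holomorphic_on disc" and "\<gamma> \<ge> 0"
    and bound: "\<And>w. w \<in> disc \<Longrightarrow> (1 - (cmod w)\<^sup>2) powr \<gamma> * cmod (H w) \<le> M"
    and z: "z \<in> disc"
  shows "(1 - (cmod z)\<^sup>2) powr (\<gamma> + 1) * cmod (deriv H z) \<le> 4 powr (\<gamma> + 1) * M"
proof -
  define d where "d = 1 - (cmod z)\<^sup>2"
  define \<rho> where "\<rho> = (1 - cmod z) / 2"
  have d_pos: "d > 0" unfolding d_def using disc_weight_pos[OF z] .
  have \<rho>_pos: "\<rho> > 0" using z by (simp add: \<rho>_def)
  have "d \<le> 4 * \<rho>"
    using zero_le_power2[of "1 - cmod z"] by (simp add: d_def \<rho>_def power2_eq_square algebra_simps)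
  have M_nonneg: "M \<ge> 0" using bound[of 0] by simp (meson norm_ge_zero order_trans)
  have cball_sub: "cball z \<rho> \<subseteq> disc"
    using disc_weight_near(1)[OF z] by (auto simp: \<rho>_def dist_norm)
  define B where "B = M * 4 powr \<gamma> / d powr \<gamma>"
  have H_circle: "cmod (H w) \<le> B" if w: "cmod (z - w) = \<rho>" for w
  proof -
    note near = disc_weight_near[OF z, of w]
    have "(d / 4) powr \<gamma> \<le> (1 - (cmod w)\<^sup>2) powr \<gamma>"
      using near w d_pos \<open>\<gamma> \<ge> 0\<close> by (intro powr_mono2) (auto simp: d_def \<rho>_def)
    then have "d powr \<gamma> / 4 powr \<gamma> \<le> (1 - (cmod w)\<^sup>2) powr \<gamma>"
      using d_pos by (simp add: powr_divide)
    moreover have "(1 - (cmod w)\<^sup>2) powr \<gamma> * cmod (H w) \<le> M"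
      using bound near w by (simp add: \<rho>_def)
    ultimately have "d powr \<gamma> / 4 powr \<gamma> * cmod (H w) \<le> M"
      by (meson mult_right_mono norm_ge_zero order_trans)
    then show ?thesis using d_pos by (simp add: B_def field_simps)
  qed
  have "cmod ((deriv ^^ 1) H z) \<le> fact 1 * B / \<rho> ^ 1"
    by (rule Cauchy_inequality[OF holomorphic_on_subset[OF holo]
          continuous_on_subset[OF holomorphic_on_imp_continuous_on[OF holo] cball_sub] \<rho>_pos H_circle])
       (use cball_sub ball_subset_cball in blast)
  then have "d powr (\<gamma> + 1) * cmod (deriv H z) \<le> d powr (\<gamma> + 1) * (B / \<rho>)"
    by (intro mult_left_mono) auto
  also have "\<dots> = M * 4 powr \<gamma> * (d / \<rho>)"
    using d_pos \<rho>_pos by (simp add: B_def powr_add field_simps)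
  also have "\<dots> \<le> M * 4 powr \<gamma> * 4"
    using \<open>d \<le> 4 * \<rho>\<close> \<rho>_pos M_nonneg by (intro mult_left_mono) (auto simp: field_simps)
  also have "\<dots> = 4 powr (\<gamma> + 1) * M" by (simp add: powr_add)
  finally show ?thesis by (simp add: d_def)
qed

lemma weighted_intop_le:
  assumes holo: "H holomorphic_on disc" and "\<gamma> > 0"
    and bound: "\<And>w. w \<in> disc \<Longrightarrow> (1 - (cmod w)\<^sup>2) powr (\<gamma> + 1) * cmod (H w) \<le> M"
    and z: "z \<in> disc"
  shows "(1 - (cmod z)\<^sup>2) powr \<gamma> * cmod (intop H z) \<le> 2 powr \<gamma> / \<gamma> * M"
proof -
  define r where "r = cmod z"
  have r0: "0 \<le> r" and r1: "r < 1" using z by (auto simp: r_def)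
  have M_nonneg: "M \<ge> 0" using bound[of 0] by simp (meson norm_ge_zero order_trans)
  define \<phi> where "\<phi> = (\<lambda>t::real. M / \<gamma> * (1 - t * r) powr (- \<gamma>))"
  define \<phi>' where "\<phi>' = (\<lambda>t::real. M * r * (1 - t * r) powr (- \<gamma> - 1))"
  have "cmod (intop H z - intop H 0) \<le> \<phi> 1 - \<phi> 0"
  proof (rule norm_diff_le_radial_majorant[OF holomorphic_on_intop[OF holo] z])
    have "0 < 1 - t * r" if "t \<in> {0..1}" for t
      using radial_point_weight(2)[OF _ _ z] that by (simp add: r_def)
    then show "continuous_on {0..1} \<phi>"
      unfolding \<phi>_def by (intro continuous_intros) force+
    fix t :: real assume t: "0 < t" "t < 1"
    note tz = radial_point_weight[OF less_imp_le less_imp_le, OF t z, folded r_def]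
    show "(\<phi> has_real_derivative \<phi>' t) (at t)"
      unfolding \<phi>_def \<phi>'_def using tz(2) \<open>\<gamma> > 0\<close>
      by (auto intro!: derivative_eq_intros simp: field_simps)
    have "(1 - t * r) powr (\<gamma> + 1) \<le> (1 - (cmod (of_real t * z))\<^sup>2) powr (\<gamma> + 1)"
      using tz \<open>\<gamma> > 0\<close> by (intro powr_mono2) auto
    then have "(1 - t * r) powr (\<gamma> + 1) * cmod (H (of_real t * z)) \<le> M"
      using bound[OF tz(1)] by (meson mult_right_mono norm_ge_zero order_trans)
    then have "cmod (H (of_real t * z)) \<le> M * (1 - t * r) powr (- \<gamma> - 1)"
      using tz(2) by (simp add: powr_minus_divide field_simps powr_diff powr_add)
    from mult_left_mono[OF this r0]
    show "cmod z * cmod (deriv (intop H) (of_real t * z)) \<le> \<phi>' t"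
      unfolding deriv_intop[OF holo tz(1)] \<phi>'_def r_def[symmetric] by (simp add: mult_ac)
  qed
  then have "cmod (intop H z) \<le> M / \<gamma> * (1 - r) powr (- \<gamma>)"
    using divide_nonneg_pos[OF M_nonneg \<open>\<gamma> > 0\<close>] by (simp add: \<phi>_def)
  then have "(1 - r\<^sup>2) powr \<gamma> * cmod (intop H z) \<le> (1 - r\<^sup>2) powr \<gamma> * (M / \<gamma> * (1 - r) powr (- \<gamma>))"
    by (intro mult_left_mono) auto
  also have "\<dots> = M / \<gamma> * ((1 - r\<^sup>2) / (1 - r)) powr \<gamma>"
    using r1 r0 by (simp add: powr_minus_divide powr_divide)
  also have "(1 - r\<^sup>2) / (1 - r) = 1 + r"
    using r1 by (simp add: power2_eq_square field_simps)
  also have "M / \<gamma> * (1 + r) powr \<gamma> \<le> M / \<gamma> * 2 powr \<gamma>"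
    using r1 r0 M_nonneg \<open>\<gamma> > 0\<close> by (intro mult_left_mono powr_mono2) auto
  finally show ?thesis by (simp add: r_def mult.commute)
qed

lemma weighted_intop_funpow_le:
  assumes "\<gamma> > 0"
  shows "\<exists>C>0. \<forall>H M. H holomorphic_on disc \<longrightarrow>
     (\<forall>w\<in>disc. (1 - (cmod w)\<^sup>2) powr (\<gamma> + real k) * cmod (H w) \<le> M) \<longrightarrow>
     (\<forall>z\<in>disc. (1 - (cmod z)\<^sup>2) powr \<gamma> * cmod ((intop ^^ k) H z) \<le> C * M)"
  using assms
proof (induction k arbitrary: \<gamma>)
  case 0
  show ?case by (rule exI[of _ 1]) simp
next
  case (Suc k)
  obtain C where C: "C > 0" and IH: "\<And>H M. H holomorphic_on disc \<Longrightarrow>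
     (\<forall>w\<in>disc. (1 - (cmod w)\<^sup>2) powr (\<gamma> + 1 + real k) * cmod (H w) \<le> M) \<Longrightarrow>
     (\<forall>z\<in>disc. (1 - (cmod z)\<^sup>2) powr (\<gamma> + 1) * cmod ((intop ^^ k) H z) \<le> C * M)"
    using Suc.IH[of "\<gamma> + 1"] Suc.prems by auto
  show ?case
  proof (intro exI[of _ "2 powr \<gamma> / \<gamma> * C"] conjI allI impI ballI)
    show "0 < 2 powr \<gamma> / \<gamma> * C" using C Suc.prems by simp
    fix H M z assume H: "H holomorphic_on disc" and z: "z \<in> disc"
      and bound: "\<forall>w\<in>disc. (1 - (cmod w)\<^sup>2) powr (\<gamma> + real (Suc k)) * cmod (H w) \<le> M"
    have "\<forall>w\<in>disc. (1 - (cmod w)\<^sup>2) powr (\<gamma> + 1 + real k) * cmod (H w) \<le> M"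
      using bound by (simp add: add_ac)
    then have "(1 - (cmod z)\<^sup>2) powr \<gamma> * cmod (intop ((intop ^^ k) H) z) \<le> 2 powr \<gamma> / \<gamma> * (C * M)"
      using IH[OF H] by (intro weighted_intop_le[OF holomorphic_on_intop_funpow[OF H] Suc.prems _ z]) auto
    then show "(1 - (cmod z)\<^sup>2) powr \<gamma> * cmod ((intop ^^ Suc k) H z) \<le> 2 powr \<gamma> / \<gamma> * C * M"
      by (simp add: mult.assoc)
  qed
qed

lemma weighted_le_of_intop_funpow:
  assumes "\<gamma> > 0"
  shows "\<exists>C>0. \<forall>H M. H holomorphic_on disc \<longrightarrow>
     (\<forall>w\<in>disc. (1 - (cmod w)\<^sup>2) powr \<gamma> * cmod ((intop ^^ k) H w) \<le> M) \<longrightarrow>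
     (\<forall>z\<in>disc. (1 - (cmod z)\<^sup>2) powr (\<gamma> + real k) * cmod (H z) \<le> C * M)"
  using assms
proof (induction k arbitrary: \<gamma>)
  case 0
  show ?case by (rule exI[of _ 1]) simp
next
  case (Suc k)
  obtain C where C: "C > 0" and IH: "\<And>H M. H holomorphic_on disc \<Longrightarrow>
     (\<forall>w\<in>disc. (1 - (cmod w)\<^sup>2) powr (\<gamma> + 1) * cmod ((intop ^^ k) H w) \<le> M) \<Longrightarrow>
     (\<forall>z\<in>disc. (1 - (cmod z)\<^sup>2) powr (\<gamma> + 1 + real k) * cmod (H z) \<le> C * M)"
    using Suc.IH[of "\<gamma> + 1"] Suc.prems by auto
  show ?case
  proof (intro exI[of _ "C * 4 powr (\<gamma> + 1)"] conjI allI impI ballI)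
    show "0 < C * 4 powr (\<gamma> + 1)" using C by simp
    fix H M z assume H: "H holomorphic_on disc" and z: "z \<in> disc"
      and bound: "\<forall>w\<in>disc. (1 - (cmod w)\<^sup>2) powr \<gamma> * cmod ((intop ^^ Suc k) H w) \<le> M"
    have "(1 - (cmod w)\<^sup>2) powr (\<gamma> + 1) * cmod ((intop ^^ k) H w) \<le> 4 powr (\<gamma> + 1) * M"
      if w: "w \<in> disc" for w
    proof -
      have "(1 - (cmod w)\<^sup>2) powr (\<gamma> + 1) * cmod (deriv (intop ((intop ^^ k) H)) w)
              \<le> 4 powr (\<gamma> + 1) * M"
        using bound Suc.prems
        by (intro weighted_deriv_le[OF holomorphic_on_intop[OF holomorphic_on_intop_funpow[OF H]] _ _ w]) auto
      then show ?thesis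
        using deriv_intop[OF holomorphic_on_intop_funpow[OF H] w] by simp
    qed
    then have "(1 - (cmod z)\<^sup>2) powr (\<gamma> + 1 + real k) * cmod (H z) \<le> C * (4 powr (\<gamma> + 1) * M)"
      using IH[OF H] z by blast
    then show "(1 - (cmod z)\<^sup>2) powr (\<gamma> + real (Suc k)) * cmod (H z) \<le> C * 4 powr (\<gamma> + 1) * M"
      by (simp add: add_ac mult.assoc)
  qed
qed

section \<open>Bloch-type spaces\<close>

lemma bloch_SUP_le:
  assumes "\<And>z. z \<in> disc \<Longrightarrow> (1 - (cmod z)\<^sup>2) powr \<gamma> * cmod (deriv f z) \<le> B"
  shows "(SUP z\<in>disc. (1 - (cmod z)\<^sup>2) powr \<gamma> * cmod (deriv f z)) \<le> B"
  by (rule cSUP_least) (use assms in auto)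

lemma bloch_weighted_deriv_le_SUP:
  assumes "f \<in> bloch \<gamma>" "z \<in> disc"
  shows "(1 - (cmod z)\<^sup>2) powr \<gamma> * cmod (deriv f z)
           \<le> (SUP z\<in>disc. (1 - (cmod z)\<^sup>2) powr \<gamma> * cmod (deriv f z))"
  by (rule cSUP_upper) (use assms in \<open>auto simp: bloch_def\<close>)

lemma bloch_SUP_nonneg:
  assumes "f \<in> bloch \<gamma>"
  shows "0 \<le> (SUP z\<in>disc. (1 - (cmod z)\<^sup>2) powr \<gamma> * cmod (deriv f z))"
  using bloch_weighted_deriv_le_SUP[OF assms, of 0] by (simp add: order_trans[rotated])

lemma bloch_norm_nonneg: "f \<in> bloch \<gamma> \<Longrightarrow> 0 \<le> bloch_norm \<gamma> f"
  unfolding bloch_norm_def using bloch_SUP_nonneg[of f \<gamma>] by simp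

lemma bloch_weighted_deriv_le_norm:
  assumes "f \<in> bloch \<gamma>" "z \<in> disc"
  shows "(1 - (cmod z)\<^sup>2) powr \<gamma> * cmod (deriv f z) \<le> bloch_norm \<gamma> f"
  using bloch_weighted_deriv_le_SUP[OF assms] unfolding bloch_norm_def
  by (smt (verit) norm_ge_zero)

lemma intop_funpow_bloch_norm_le:
  assumes "\<beta> > 0" "n > 0"
  shows "\<exists>C>0. \<forall>H M. H holomorphic_on disc \<longrightarrow>
     (\<forall>w\<in>disc. (1 - (cmod w)\<^sup>2) powr (real n + \<beta> - 1) * cmod (H w) \<le> M) \<longrightarrow>
     (intop ^^ n) H \<in> bloch \<beta> \<and> bloch_norm \<beta> ((intop ^^ n) H) \<le> C * M"
proof -
  have exponent: "\<beta> + real (n - 1) = real n + \<beta> - 1" using assms(2) by (simp add: of_nat_diff)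
  obtain C where C: "C > 0" and int_bound: "\<And>H M. H holomorphic_on disc \<Longrightarrow>
     (\<forall>w\<in>disc. (1 - (cmod w)\<^sup>2) powr (real n + \<beta> - 1) * cmod (H w) \<le> M) \<Longrightarrow>
     (\<forall>z\<in>disc. (1 - (cmod z)\<^sup>2) powr \<beta> * cmod ((intop ^^ (n - 1)) H z) \<le> C * M)"
    using weighted_intop_funpow_le[OF assms(1), of "n - 1"] unfolding exponent by blast
  show ?thesis
  proof (intro exI[of _ C] conjI allI impI C)
    fix H M assume H: "H holomorphic_on disc"
      and bound: "\<forall>w\<in>disc. (1 - (cmod w)\<^sup>2) powr (real n + \<beta> - 1) * cmod (H w) \<le> M"
    have deriv_bound: "(1 - (cmod z)\<^sup>2) powr \<beta> * cmod (deriv ((intop ^^ n) H) z) \<le> C * M"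
      if z: "z \<in> disc" for z
      using int_bound[OF H bound] z deriv_intop_funpow[OF H z assms(2)] by simp
    then show "(intop ^^ n) H \<in> bloch \<beta>"
      unfolding bloch_def using holomorphic_on_intop_funpow[OF H] by (auto intro!: bdd_aboveI2)
    show "bloch_norm \<beta> ((intop ^^ n) H) \<le> C * M"
      unfolding bloch_norm_def using intop_funpow_0[OF assms(2)] bloch_SUP_le[OF deriv_bound] by simp
  qed
qed

lemma weighted_le_bloch_norm_intop_funpow:
  assumes "\<beta> > 0" "n > 0"
  shows "\<exists>C>0. \<forall>H. H holomorphic_on disc \<longrightarrow> (intop ^^ n) H \<in> bloch \<beta> \<longrightarrow>
     (\<forall>z\<in>disc. (1 - (cmod z)\<^sup>2) powr (real n + \<beta> - 1) * cmod (H z)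
                  \<le> C * bloch_norm \<beta> ((intop ^^ n) H))"
proof -
  have exponent: "\<beta> + real (n - 1) = real n + \<beta> - 1" using assms(2) by (simp add: of_nat_diff)
  obtain C where C: "C > 0" and bound: "\<And>H M. H holomorphic_on disc \<Longrightarrow>
     (\<forall>w\<in>disc. (1 - (cmod w)\<^sup>2) powr \<beta> * cmod ((intop ^^ (n - 1)) H w) \<le> M) \<Longrightarrow>
     (\<forall>z\<in>disc. (1 - (cmod z)\<^sup>2) powr (real n + \<beta> - 1) * cmod (H z) \<le> C * M)"
    using weighted_le_of_intop_funpow[OF assms(1), of "n - 1"] unfolding exponent by blast
  show ?thesis
  proof (intro exI[of _ C] conjI allI impI C)
    fix H assume H: "H holomorphic_on disc" and "(intop ^^ n) H \<in> bloch \<beta>"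
    then have "\<forall>w\<in>disc. (1 - (cmod w)\<^sup>2) powr \<beta> * cmod ((intop ^^ (n - 1)) H w)
                 \<le> bloch_norm \<beta> ((intop ^^ n) H)"
      using bloch_weighted_deriv_le_norm deriv_intop_funpow[OF H _ assms(2)] by metis
    then show "\<forall>z\<in>disc. (1 - (cmod z)\<^sup>2) powr (real n + \<beta> - 1) * cmod (H z)
                 \<le> C * bloch_norm \<beta> ((intop ^^ n) H)"
      by (rule bound[OF H])
  qed
qed

section \<open>Logarithmic growth of Bloch functions\<close>

abbreviation log_weight :: "complex \<Rightarrow> real" where
  "log_weight z \<equiv> ln (2 / (1 - (cmod z)\<^sup>2))"

abbreviation log_weighted :: "real \<Rightarrow> (complex \<Rightarrow> complex) \<Rightarrow> complex \<Rightarrow> real" where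
  "log_weighted e g z \<equiv> (1 - (cmod z)\<^sup>2) powr e * log_weight z * cmod (g z)"

lemma ln2_le_log_weight:
  assumes "z \<in> disc"
  shows "ln 2 \<le> log_weight z"
proof -
  have "2 \<le> 2 / (1 - (cmod z)\<^sup>2)"
    using disc_weight_pos[OF assms] by (simp add: field_simps)
  then show ?thesis
    using disc_weight_pos[OF assms] by (subst ln_le_cancel_iff) auto
qed

lemma log_weight_pos: "z \<in> disc \<Longrightarrow> 0 < log_weight z"
  using ln2_le_log_weight[of z] ln2_ge_two_thirds by linarith

lemma neg_ln_le_log_weight:
  assumes "z \<in> disc"
  shows "- ln (1 - cmod z) \<le> log_weight z"
proof -
  have z1: "cmod z < 1" using assms by simp
  have "1 - (cmod z)\<^sup>2 \<le> 2 * (1 - cmod z)"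
    using zero_le_power2[of "1 - cmod z"] by (simp add: power2_eq_square algebra_simps)
  then have "1 / (1 - cmod z) \<le> 2 / (1 - (cmod z)\<^sup>2)"
    using disc_weight_pos[OF assms] z1 by (simp add: field_simps)
  then have "ln (1 / (1 - cmod z)) \<le> log_weight z"
    using z1 disc_weight_pos[OF assms] by (subst ln_le_cancel_iff) auto
  then show ?thesis using z1 by (simp add: ln_div)
qed

lemma log_weight_mono:
  assumes "z \<in> disc" "cmod w \<le> cmod z"
  shows "log_weight w \<le> log_weight z"
proof -
  have w: "w \<in> disc" using assms by simp
  have "(cmod w)\<^sup>2 \<le> (cmod z)\<^sup>2" using assms(2) by (simp add: power_mono)
  then have "2 / (1 - (cmod w)\<^sup>2) \<le> 2 / (1 - (cmod z)\<^sup>2)"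
    using disc_weight_pos[OF w] disc_weight_pos[OF assms(1)] by (intro divide_left_mono) auto
  then show ?thesis
    using disc_weight_pos[OF w] disc_weight_pos[OF assms(1)] by (subst ln_le_cancel_iff) auto
qed

lemma norm_diff_0_le_SUP_log_weight:
  assumes f: "f \<in> bloch 1" and z: "z \<in> disc"
  shows "cmod (f z - f 0) \<le> (SUP z\<in>disc. (1 - (cmod z)\<^sup>2) powr 1 * cmod (deriv f z)) * log_weight z"
proof -
  define S where "S = (SUP z\<in>disc. (1 - (cmod z)\<^sup>2) powr 1 * cmod (deriv f z))"
  have S_nonneg: "S \<ge> 0" unfolding S_def by (rule bloch_SUP_nonneg[OF f])
  have holo: "f holomorphic_on disc" using f by (simp add: bloch_def)
  define r where "r = cmod z"
  have r0: "0 \<le> r" and r1: "r < 1" using z by (auto simp: r_def)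
  define \<phi> where "\<phi> = (\<lambda>t::real. - S * ln (1 - t * r))"
  define \<phi>' where "\<phi>' = (\<lambda>t::real. S * r / (1 - t * r))"
  have "cmod (f z - f 0) \<le> \<phi> 1 - \<phi> 0"
  proof (rule norm_diff_le_radial_majorant[OF holo z])
    have "0 < 1 - t * r" if "t \<in> {0..1}" for t
      using radial_point_weight(2)[OF _ _ z] that by (simp add: r_def)
    then show "continuous_on {0..1} \<phi>"
      unfolding \<phi>_def by (intro continuous_intros) (metis less_irrefl)
    fix t :: real assume t: "0 < t" "t < 1"
    note tz = radial_point_weight[OF less_imp_le less_imp_le, OF t z, folded r_def]
    show "(\<phi> has_real_derivative \<phi>' t) (at t)"
      unfolding \<phi>_def \<phi>'_def using tz(2)
      by (auto intro!: derivative_eq_intros simp: field_simps)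
    have "(1 - (cmod (of_real t * z))\<^sup>2) * cmod (deriv f (of_real t * z)) \<le> S"
      using bloch_weighted_deriv_le_SUP[OF f tz(1)] disc_weight_pos[OF tz(1)] unfolding S_def by simp
    then have "(1 - t * r) * cmod (deriv f (of_real t * z)) \<le> S"
      using tz(3) by (meson mult_right_mono norm_ge_zero order_trans)
    then have "cmod (deriv f (of_real t * z)) \<le> S / (1 - t * r)"
      using tz(2) by (simp add: field_simps)
    from mult_left_mono[OF this r0]
    show "cmod z * cmod (deriv f (of_real t * z)) \<le> \<phi>' t"
      unfolding \<phi>'_def r_def[symmetric] by (simp add: mult_ac)
  qed
  moreover have "S * (- ln (1 - r)) \<le> S * log_weight z"
    using neg_ln_le_log_weight[OF z] S_nonneg unfolding r_def by (rule mult_left_mono)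
  ultimately show ?thesis
    by (simp add: \<phi>_def S_def)
qed

lemma norm_le_bloch_norm_log_weight:
  assumes f: "f \<in> bloch 1" and z: "z \<in> disc"
  shows "cmod (f z) \<le> bloch_norm 1 f * log_weight z / ln 2"
proof -
  define S where "S = (SUP z\<in>disc. (1 - (cmod z)\<^sup>2) powr 1 * cmod (deriv f z))"
  have S_nonneg: "S \<ge> 0" unfolding S_def by (rule bloch_SUP_nonneg[OF f])
  have "cmod (f z) \<le> cmod (f 0) + S * log_weight z"
    using norm_diff_0_le_SUP_log_weight[OF f z, folded S_def] norm_triangle_ineq2[of "f z" "f 0"] by linarith
  also have "\<dots> \<le> (cmod (f 0) + S) * (log_weight z / ln 2)"
  proof -
    have "1 \<le> log_weight z / ln 2" using ln2_le_log_weight[OF z] by simp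
    then have "cmod (f 0) \<le> cmod (f 0) * (log_weight z / ln 2)"
      using mult_left_mono[OF _ norm_ge_zero[of "f 0"]] by (metis mult.right_neutral)
    moreover have "log_weight z \<le> log_weight z / ln 2"
      using log_weight_pos[OF z] ln_2_less_1 by (simp add: le_divide_eq)
    then have "S * log_weight z \<le> S * (log_weight z / ln 2)"
      using S_nonneg by (rule mult_left_mono)
    ultimately show ?thesis unfolding distrib_right by linarith
  qed
  finally show ?thesis
    unfolding bloch_norm_def S_def[symmetric] by simp
qed

text \<open>\<open>bloch_test_log a\<close> is the branch of \<open>log (2 / (1 - cnj a * z))\<close> that is real at
  \<open>z = a\<close>, where it equals \<open>log_weight a\<close>. Hence \<open>bloch_test a\<close> lies in the unit ball of
  \<open>\<B>\<close> and attains the maximal logarithmic growth of Bloch functions at \<open>a\<close>, up to the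
  factor 50.\<close>

definition bloch_test_log :: "complex \<Rightarrow> complex \<Rightarrow> complex" where
  "bloch_test_log a z = of_real (ln 2) - Ln (1 - cnj a * z)"

definition bloch_test :: "complex \<Rightarrow> complex \<Rightarrow> complex" where
  "bloch_test a z = (bloch_test_log a z)\<^sup>2 / of_real (50 * log_weight a)"

lemma one_minus_cnj_mult_bounds:
  assumes a: "a \<in> disc" and z: "z \<in> disc"
  shows "0 < 1 - cmod a * cmod z" "1 - cmod a * cmod z \<le> cmod (1 - cnj a * z)"
    and "cmod (1 - cnj a * z) \<le> 2" "1 - cnj a * z \<notin> \<real>\<^sub>\<le>\<^sub>0"
proof -
  have norm_az: "cmod (cnj a * z) = cmod a * cmod z" by (simp add: norm_mult)
  have "cmod a * cmod z \<le> cmod a"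
    using z by (intro mult_left_le) auto
  then have "cmod a * cmod z < 1"
    using a by simp
  then show "0 < 1 - cmod a * cmod z" by simp
  have "Re (cnj a * z) < 1"
    using complex_Re_le_cmod[of "cnj a * z"] norm_az \<open>cmod a * cmod z < 1\<close> by simp
  then show "1 - cnj a * z \<notin> \<real>\<^sub>\<le>\<^sub>0" by (simp add: complex_nonpos_Reals_iff)
  show "cmod (1 - cnj a * z) \<le> 2"
    using norm_triangle_ineq4[of 1 "cnj a * z"] norm_az \<open>cmod a * cmod z < 1\<close> by simp
  show "1 - cmod a * cmod z \<le> cmod (1 - cnj a * z)"
    using norm_triangle_ineq2[of 1 "cnj a * z"] norm_az by simp
qed

lemma norm_bloch_test_log_le:
  assumes a: "a \<in> disc" and z: "z \<in> disc"
  shows "cmod (bloch_test_log a z) \<le> 2 * ln 2 + pi - ln (1 - cmod a * cmod z)"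
proof -
  define u where "u = 1 - cnj a * z"
  note u_bounds = one_minus_cnj_mult_bounds[OF a z, folded u_def]
  have u0: "u \<noteq> 0" using u_bounds(4) by auto
  have "cmod (bloch_test_log a z) \<le> ln 2 + cmod (Ln u)"
    unfolding bloch_test_log_def u_def[symmetric] using norm_triangle_ineq4[of "of_real (ln 2)" "Ln u"]
    by simp
  also have "cmod (Ln u) \<le> \<bar>ln (cmod u)\<bar> + \<bar>Im (Ln u)\<bar>"
    using cmod_le[of "Ln u"] Re_Ln[OF u0] by simp
  also have "\<bar>Im (Ln u)\<bar> \<le> pi" using mpi_less_Im_Ln[OF u0] Im_Ln_le_pi[OF u0] by auto
  also have "\<bar>ln (cmod u)\<bar> \<le> ln 2 - ln (1 - cmod a * cmod z)"
  proof -
    have "ln (cmod u) \<le> ln 2" using u_bounds(3) u0 by simp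
    moreover have "ln (1 - cmod a * cmod z) \<le> ln (cmod u)"
      using u_bounds(1,2) by (subst ln_le_cancel_iff) auto
    moreover have "ln (1 - cmod a * cmod z) \<le> 0" using u_bounds(1) by simp
    moreover have "0 \<le> ln (2::real)" by simp
    ultimately show ?thesis by linarith
  qed
  finally show ?thesis by simp
qed

lemma norm_bloch_test_log_le_log_weight:
  assumes a: "a \<in> disc" and z: "z \<in> disc"
  shows "cmod (bloch_test_log a z) \<le> 10 * log_weight a"
proof -
  have "cmod a * cmod z \<le> cmod a"
    using z by (intro mult_left_le) auto
  then have "- ln (1 - cmod a * cmod z) \<le> - ln (1 - cmod a)" using a by simp
  also have "\<dots> \<le> log_weight a" by (rule neg_ln_le_log_weight[OF a])
  finally have "- ln (1 - cmod a * cmod z) \<le> log_weight a" .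
  moreover have "2 * ln 2 + pi \<le> 9 * log_weight a"
    using ln2_le_log_weight[OF a] ln2_ge_two_thirds ln_2_less_1 pi_less_4 by linarith
  ultimately show ?thesis using norm_bloch_test_log_le[OF a z] by linarith
qed

lemma has_field_derivative_bloch_test:
  assumes a: "a \<in> disc" and z: "z \<in> disc"
  shows "(bloch_test a has_field_derivative
            2 * bloch_test_log a z * (cnj a / (1 - cnj a * z)) / of_real (50 * log_weight a)) (at z)"
proof -
  have "(bloch_test_log a has_field_derivative cnj a / (1 - cnj a * z)) (at z)"
    unfolding bloch_test_log_def[abs_def]
    using one_minus_cnj_mult_bounds(4)[OF a z]
    by (auto intro!: derivative_eq_intros simp: field_simps)
  then show ?thesis
    unfolding bloch_test_def[abs_def] using log_weight_pos[OF a]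
    by (auto intro!: derivative_eq_intros simp: mult_ac)
qed

lemma holomorphic_on_bloch_test: "a \<in> disc \<Longrightarrow> bloch_test a holomorphic_on disc"
  unfolding holomorphic_on_open[OF open_ball] using has_field_derivative_bloch_test by blast

lemma bloch_test_at:
  assumes a: "a \<in> disc"
  shows "bloch_test a a = of_real (log_weight a / 50)"
proof -
  have d: "0 < 1 - (cmod a)\<^sup>2" using disc_weight_pos[OF a] .
  have "cnj a * a = of_real ((cmod a)\<^sup>2)"
    by (metis complex_norm_square mult.commute of_real_power)
  then have "1 - cnj a * a = of_real (1 - (cmod a)\<^sup>2)"
    by simp
  then have "bloch_test_log a a = of_real (log_weight a)"
    unfolding bloch_test_log_def using Ln_of_real[OF d] d by (simp add: ln_div)
  then show ?thesis unfolding bloch_test_def using log_weight_pos[OF a] by (simp add: power2_eq_square)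
qed

lemma weighted_deriv_bloch_test_le:
  assumes a: "a \<in> disc" and z: "z \<in> disc"
  shows "(1 - (cmod z)\<^sup>2) powr 1 * cmod (deriv (bloch_test a) z) \<le> 4 / 5"
proof -
  have z1: "cmod z < 1" using z by simp
  note u_bounds = one_minus_cnj_mult_bounds[OF a z]
  have "1 - cmod z \<le> cmod (1 - cnj a * z)"
    using u_bounds(2) mult_right_mono[of "cmod a" 1 "cmod z"] a by simp
  then have "cmod (cnj a / (1 - cnj a * z)) \<le> 1 / (1 - cmod z)"
    unfolding norm_divide complex_mod_cnj using a z1 by (intro frac_le) auto
  moreover have "cmod (deriv (bloch_test a) z) = 2 * cmod (bloch_test_log a z)
                   * cmod (cnj a / (1 - cnj a * z)) / (50 * log_weight a)"
    unfolding DERIV_imp_deriv[OF has_field_derivative_bloch_test[OF a z]]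
    using log_weight_pos[OF a] by (simp add: norm_divide norm_mult)
  ultimately have "cmod (deriv (bloch_test a) z)
               \<le> 2 * (10 * log_weight a) * (1 / (1 - cmod z)) / (50 * log_weight a)"
    using norm_bloch_test_log_le_log_weight[OF a z] log_weight_pos[OF a]
    by (simp only:) (intro divide_right_mono mult_mono; simp)
  also have "\<dots> = (2 / 5) / (1 - cmod z)" using log_weight_pos[OF a] z1 by (simp add: field_simps)
  finally have "(1 - (cmod z)\<^sup>2) * cmod (deriv (bloch_test a) z) \<le> (1 - (cmod z)\<^sup>2) * ((2 / 5) / (1 - cmod z))"
    using disc_weight_pos[OF z] by (intro mult_left_mono) auto
  also have "\<dots> = (2 / 5) * (1 + cmod z)"
    using z1 by (simp add: power2_eq_square field_simps)
  also have "\<dots> \<le> 4 / 5" using z1 by simp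
  finally show ?thesis using disc_weight_pos[OF z] by simp
qed

lemma norm_bloch_test_0_le: "a \<in> disc \<Longrightarrow> cmod (bloch_test a 0) \<le> 1 / 5"
proof -
  assume a: "a \<in> disc"
  have "cmod (bloch_test a 0) = (ln 2)\<^sup>2 / (50 * log_weight a)"
    using log_weight_pos[OF a] by (simp add: bloch_test_def bloch_test_log_def norm_divide norm_power)
  also have "\<dots> \<le> 1 / (50 * (2 / 3))"
  proof (rule frac_le)
    show "(ln (2::real))\<^sup>2 \<le> 1" using ln_2_less_1 ln2_ge_two_thirds by (simp add: power_le_one)
    show "50 * (2 / 3) \<le> 50 * log_weight a" using ln2_le_log_weight[OF a] ln2_ge_two_thirds by simp
  qed auto
  finally show ?thesis by simp
qed

lemma bloch_test_in_bloch: "a \<in> disc \<Longrightarrow> bloch_test a \<in> bloch 1"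
  unfolding bloch_def using holomorphic_on_bloch_test weighted_deriv_bloch_test_le
  by (auto intro!: bdd_aboveI2[where M = "4 / 5"])

lemma bloch_norm_bloch_test_le: "a \<in> disc \<Longrightarrow> bloch_norm 1 (bloch_test a) \<le> 1"
  unfolding bloch_norm_def
  using norm_bloch_test_0_le bloch_SUP_le[OF weighted_deriv_bloch_test_le] by fastforce

lemma norm_bloch_test_le:
  assumes "\<rho> < 1" and a: "a \<in> disc" and w: "cmod w \<le> \<rho>"
  shows "cmod (bloch_test a w) \<le> (2 * ln 2 + pi - ln (1 - \<rho>))\<^sup>2 / (50 * log_weight a)"
proof -
  have "cmod a * cmod w \<le> \<rho>"
    using mult_mono[of "cmod a" 1 "cmod w" \<rho>] a w by simp
  then have "- ln (1 - cmod a * cmod w) \<le> - ln (1 - \<rho>)" using \<open>\<rho> < 1\<close> by simp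
  moreover have "w \<in> disc" using w \<open>\<rho> < 1\<close> by simp
  ultimately have "cmod (bloch_test_log a w) \<le> 2 * ln 2 + pi - ln (1 - \<rho>)"
    using norm_bloch_test_log_le[OF a] by fastforce
  then show ?thesis
    unfolding bloch_test_def using log_weight_pos[OF a]
    by (simp add: norm_divide norm_power divide_right_mono power_mono)
qed

section \<open>Boundedness\<close>

abbreviation intop_mult :: "nat \<Rightarrow> (complex \<Rightarrow> complex) \<Rightarrow> (complex \<Rightarrow> complex) \<Rightarrow> complex \<Rightarrow> complex" where
  "intop_mult n g f \<equiv> (intop ^^ n) (\<lambda>z. f z * g z)"

lemma weighted_norm_mult_le:
  assumes "cmod (f w) \<le> c * log_weight w" "log_weighted e g w \<le> B" "c \<ge> 0"
  shows "(1 - (cmod w)\<^sup>2) powr e * cmod (f w * g w) \<le> c * B"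
proof -
  have "(1 - (cmod w)\<^sup>2) powr e * cmod (f w * g w) = (1 - (cmod w)\<^sup>2) powr e * cmod (f w) * cmod (g w)"
    by (simp add: norm_mult)
  also have "\<dots> \<le> (1 - (cmod w)\<^sup>2) powr e * (c * log_weight w) * cmod (g w)"
    using assms(1) by (intro mult_right_mono mult_left_mono) auto
  also have "\<dots> = c * log_weighted e g w" by simp
  also have "\<dots> \<le> c * B" using assms(2,3) by (rule mult_left_mono)
  finally show ?thesis .
qed

lemma bounded_bloch_op_intop_mult:
  assumes "\<beta> > 0" "n > 0" and g: "g holomorphic_on disc"
    and "bdd_above (log_weighted (real n + \<beta> - 1) g ` disc)"
  shows "bounded_bloch_op 1 \<beta> (intop_mult n g)"
proof -
  obtain B where B: "\<And>z. z \<in> disc \<Longrightarrow> log_weighted (real n + \<beta> - 1) g z \<le> B"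
    using assms(4) unfolding bdd_above_def by blast
  obtain C where bloch_bound: "\<And>H M. H holomorphic_on disc \<Longrightarrow>
     (\<forall>w\<in>disc. (1 - (cmod w)\<^sup>2) powr (real n + \<beta> - 1) * cmod (H w) \<le> M) \<Longrightarrow>
     (intop ^^ n) H \<in> bloch \<beta> \<and> bloch_norm \<beta> ((intop ^^ n) H) \<le> C * M"
    using intop_funpow_bloch_norm_le[OF assms(1,2)] by blast
  have "intop_mult n g f \<in> bloch \<beta> \<and>
        bloch_norm \<beta> (intop_mult n g f) \<le> C * B / ln 2 * bloch_norm 1 f"
    if f: "f \<in> bloch 1" for f
  proof -
    have "(1 - (cmod w)\<^sup>2) powr (real n + \<beta> - 1) * cmod (f w * g w) \<le> bloch_norm 1 f / ln 2 * B"
      if w: "w \<in> disc" for w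
      using norm_le_bloch_norm_log_weight[OF f w] B[OF w] bloch_norm_nonneg[OF f]
      by (intro weighted_norm_mult_le) auto
    then have "\<forall>w\<in>disc. (1 - (cmod w)\<^sup>2) powr (real n + \<beta> - 1) * cmod (f w * g w)
                 \<le> bloch_norm 1 f / ln 2 * B"
      by blast
    moreover have "(\<lambda>z. f z * g z) holomorphic_on disc"
      using f g by (auto simp: bloch_def intro!: holomorphic_intros)
    ultimately have "intop_mult n g f \<in> bloch \<beta> \<and>
        bloch_norm \<beta> (intop_mult n g f) \<le> C * (bloch_norm 1 f / ln 2 * B)"
      using bloch_bound by blast
    moreover have "C * (bloch_norm 1 f / ln 2 * B) = C * B / ln 2 * bloch_norm 1 f" by simp
    ultimately show ?thesis by (simp add: mult_ac)
  qed
  then show ?thesis unfolding bounded_bloch_op_def by blast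
qed

lemma log_weighted_le_bloch_norm_intop_mult_bloch_test:
  assumes "\<beta> > 0" "n > 0" and g: "g holomorphic_on disc"
  obtains C where "C > 0"
    and "\<And>a. a \<in> disc \<Longrightarrow> intop_mult n g (bloch_test a) \<in> bloch \<beta> \<Longrightarrow>
           log_weighted (real n + \<beta> - 1) g a \<le> C * bloch_norm \<beta> (intop_mult n g (bloch_test a))"
proof -
  obtain C where C: "C > 0" and bound: "\<And>H. H holomorphic_on disc \<Longrightarrow> (intop ^^ n) H \<in> bloch \<beta> \<Longrightarrow>
     (\<forall>z\<in>disc. (1 - (cmod z)\<^sup>2) powr (real n + \<beta> - 1) * cmod (H z) \<le> C * bloch_norm \<beta> ((intop ^^ n) H))"
    using weighted_le_bloch_norm_intop_funpow[OF assms(1,2)] by blast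
  show ?thesis
  proof (rule that[of "50 * C"])
    fix a assume a: "a \<in> disc" and "intop_mult n g (bloch_test a) \<in> bloch \<beta>"
    moreover have "(\<lambda>z. bloch_test a z * g z) holomorphic_on disc"
      using holomorphic_on_bloch_test[OF a] g by (auto intro!: holomorphic_intros)
    ultimately have "(1 - (cmod a)\<^sup>2) powr (real n + \<beta> - 1) * cmod (bloch_test a a * g a)
                       \<le> C * bloch_norm \<beta> (intop_mult n g (bloch_test a))"
      using bound a by blast
    moreover have "cmod (bloch_test a a * g a) = log_weight a / 50 * cmod (g a)"
      using log_weight_pos[OF a] by (simp add: norm_mult bloch_test_at[OF a])
    ultimately show "log_weighted (real n + \<beta> - 1) g a \<le> 50 * C * bloch_norm \<beta> (intop_mult n g (bloch_test a))"
      by simp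
  qed (use C in simp)
qed

lemma bounded_bloch_op_intop_mult_imp_bdd_above:
  assumes "\<beta> > 0" "n > 0" and g: "g holomorphic_on disc"
    and bounded: "bounded_bloch_op 1 \<beta> (intop_mult n g)"
  shows "bdd_above (log_weighted (real n + \<beta> - 1) g ` disc)"
proof -
  obtain C0 where maps_into: "\<And>f. f \<in> bloch 1 \<Longrightarrow> intop_mult n g f \<in> bloch \<beta>"
    and norm_le: "\<And>f. f \<in> bloch 1 \<Longrightarrow> bloch_norm \<beta> (intop_mult n g f) \<le> C0 * bloch_norm 1 f"
    using bounded unfolding bounded_bloch_op_def by blast
  obtain C where C: "C > 0" and test_bound: "\<And>a. a \<in> disc \<Longrightarrow> intop_mult n g (bloch_test a) \<in> bloch \<beta> \<Longrightarrow>
      log_weighted (real n + \<beta> - 1) g a \<le> C * bloch_norm \<beta> (intop_mult n g (bloch_test a))"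
    using log_weighted_le_bloch_norm_intop_mult_bloch_test[OF assms(1-3)] by blast
  have "log_weighted (real n + \<beta> - 1) g a \<le> C * max C0 0" if a: "a \<in> disc" for a
  proof -
    note test_in_bloch = bloch_test_in_bloch[OF a]
    have "bloch_norm \<beta> (intop_mult n g (bloch_test a)) \<le> C0 * bloch_norm 1 (bloch_test a)"
      by (rule norm_le[OF test_in_bloch])
    also have "\<dots> \<le> max C0 0 * bloch_norm 1 (bloch_test a)"
      using bloch_norm_nonneg[OF test_in_bloch] by (intro mult_right_mono) auto
    also have "\<dots> \<le> max C0 0"
      using bloch_norm_bloch_test_le[OF a] by (intro mult_left_le) auto
    finally have "C * bloch_norm \<beta> (intop_mult n g (bloch_test a)) \<le> C * max C0 0"
      using C by (intro mult_left_mono) auto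
    then show ?thesis
      using test_bound[OF a maps_into[OF test_in_bloch]] by linarith
  qed
  then show ?thesis by (intro bdd_aboveI2)
qed

section \<open>Compactness\<close>

lemma bloch_norm_cong:
  assumes "\<And>w. w \<in> disc \<Longrightarrow> f w = h w"
  shows "bloch_norm \<gamma> f = bloch_norm \<gamma> h"
proof -
  have "deriv f z = deriv h z" if "z \<in> disc" for z
  proof (rule deriv_cong_ev)
    show "\<forall>\<^sub>F x in nhds z. f x = h x"
      using eventually_nhds_in_open[OF open_ball that] by (rule eventually_mono) (use assms in auto)
  qed simp
  then have "(SUP z\<in>disc. (1 - (cmod z)\<^sup>2) powr \<gamma> * cmod (deriv f z)) =
             (SUP z\<in>disc. (1 - (cmod z)\<^sup>2) powr \<gamma> * cmod (deriv h z))"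
    by (intro SUP_cong) auto
  then show ?thesis
    unfolding bloch_norm_def using assms[of 0] by simp
qed

lemma bloch_diff:
  assumes f: "f \<in> bloch \<gamma>" and h: "h \<in> bloch \<gamma>"
  shows "(\<lambda>z. f z - h z) \<in> bloch \<gamma>"
proof -
  have holo: "f holomorphic_on disc" "h holomorphic_on disc" using f h by (auto simp: bloch_def)
  have "(1 - (cmod z)\<^sup>2) powr \<gamma> * cmod (deriv (\<lambda>z. f z - h z) z) \<le>
          (SUP z\<in>disc. (1 - (cmod z)\<^sup>2) powr \<gamma> * cmod (deriv f z))
        + (SUP z\<in>disc. (1 - (cmod z)\<^sup>2) powr \<gamma> * cmod (deriv h z))"
    if z: "z \<in> disc" for z
  proof -
    have "deriv (\<lambda>z. f z - h z) z = deriv f z - deriv h z"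
      using holo z by (intro deriv_diff) (auto intro: holomorphic_on_imp_differentiable_at)
    then have "(1 - (cmod z)\<^sup>2) powr \<gamma> * cmod (deriv (\<lambda>z. f z - h z) z) \<le>
        (1 - (cmod z)\<^sup>2) powr \<gamma> * cmod (deriv f z) + (1 - (cmod z)\<^sup>2) powr \<gamma> * cmod (deriv h z)"
      by (simp add: distrib_left[symmetric] mult_left_mono norm_triangle_ineq4)
    then show ?thesis
      using bloch_weighted_deriv_le_SUP[OF f z] bloch_weighted_deriv_le_SUP[OF h z] by linarith
  qed
  then show ?thesis unfolding bloch_def using holo
    by (auto intro!: holomorphic_intros bdd_aboveI2)
qed

lemma norm_le_bloch_norm:
  assumes u: "u \<in> bloch \<gamma>" and "\<gamma> \<ge> 0" and z: "z \<in> disc"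
  shows "cmod (u z) \<le> bloch_norm \<gamma> u * (1 + 1 / (1 - (cmod z)\<^sup>2) powr \<gamma>)"
proof -
  define S where "S = (SUP z\<in>disc. (1 - (cmod z)\<^sup>2) powr \<gamma> * cmod (deriv u z))"
  have S_nonneg: "S \<ge> 0" unfolding S_def by (rule bloch_SUP_nonneg[OF u])
  have holo: "u holomorphic_on disc" using u by (simp add: bloch_def)
  define d where "d = 1 - (cmod z)\<^sup>2"
  have d_pos: "d > 0" using disc_weight_pos[OF z] by (simp add: d_def)
  define c where "c = 1 / d powr \<gamma>"
  have c_nonneg: "c \<ge> 0" by (simp add: c_def)
  have sub: "cball 0 (cmod z) \<subseteq> disc" using z by auto
  have "cmod (u z - u 0) \<le> (S * c) * cmod (z - 0)"
  proof (rule field_differentiable_bound[where S = "cball 0 (cmod z)" and f' = "deriv u"])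
    fix w :: complex assume w: "w \<in> cball 0 (cmod z)"
    then have wD: "w \<in> disc" using sub by auto
    show "(u has_field_derivative deriv u w) (at w within cball 0 (cmod z))"
      by (rule has_field_derivative_at_within[OF holomorphic_derivI[OF holo open_ball wD]])
    have "d powr \<gamma> \<le> (1 - (cmod w)\<^sup>2) powr \<gamma>"
      using w d_pos \<open>\<gamma> \<ge> 0\<close> by (intro powr_mono2) (auto simp: d_def power_mono)
    then have "d powr \<gamma> * cmod (deriv u w) \<le> S"
      using bloch_weighted_deriv_le_SUP[OF u wD] unfolding S_def
      by (meson mult_right_mono norm_ge_zero order_trans)
    then show "cmod (deriv u w) \<le> S * c" using d_pos by (simp add: c_def field_simps)
  qed (use z in auto)
  also have "\<dots> \<le> S * c"
    using z S_nonneg c_nonneg by (simp add: mult_left_le)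
  finally have "cmod (u z) \<le> cmod (u 0) + S * c"
    using norm_triangle_ineq2[of "u z" "u 0"] by linarith
  also have "\<dots> \<le> (cmod (u 0) + S) * (1 + c)"
    using c_nonneg S_nonneg by (simp add: algebra_simps)
  finally show ?thesis by (simp add: bloch_norm_def S_def c_def d_def)
qed

lemma norm_intop_funpow_le:
  assumes "\<rho> < 1" and holo: "H holomorphic_on disc"
    and bound: "\<And>w. cmod w \<le> \<rho> \<Longrightarrow> cmod (H w) \<le> B"
  shows "cmod w \<le> \<rho> \<Longrightarrow> cmod ((intop ^^ k) H w) \<le> B"
proof (induction k arbitrary: w)
  case 0 then show ?case using bound by simp
next
  case (Suc k)
  have "0 \<le> \<rho>" using Suc.prems norm_ge_zero order_trans by blast
  then have "cmod (H 0) \<le> B" using bound[of 0] by simp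
  then have B_nonneg: "0 \<le> B" using norm_ge_zero order_trans by blast
  have sub: "cball 0 \<rho> \<subseteq> disc" using \<open>\<rho> < 1\<close> by auto
  have "cmod (intop ((intop ^^ k) H) w - intop ((intop ^^ k) H) 0) \<le> B * cmod (w - 0)"
  proof (rule field_differentiable_bound[where S = "cball 0 \<rho>" and f' = "(intop ^^ k) H"])
    fix v :: complex assume v: "v \<in> cball 0 \<rho>"
    then have vD: "v \<in> disc" using sub by auto
    show "(intop ((intop ^^ k) H) has_field_derivative (intop ^^ k) H v) (at v within cball 0 \<rho>)"
      by (rule has_field_derivative_at_within[OF has_field_derivative_intop[OF holomorphic_on_intop_funpow[OF holo] vD]])
    show "cmod ((intop ^^ k) H v) \<le> B" using Suc.IH v by simp
  qed (use Suc.prems \<open>0 \<le> \<rho>\<close> in auto)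
  also have "\<dots> \<le> B"
    using Suc.prems \<open>\<rho> < 1\<close> B_nonneg by (simp add: mult_left_le)
  finally show ?case by simp
qed

lemma holomorphic_on_disc_bounded_on_cball:
  assumes "g holomorphic_on disc" "\<rho> < 1"
  obtains G where "G \<ge> 0" "\<And>w. cmod w \<le> \<rho> \<Longrightarrow> cmod (g w) \<le> G"
proof -
  have "cball 0 \<rho> \<subseteq> disc" using assms(2) by auto
  then have "compact (g ` cball 0 \<rho>)"
    by (rule compact_continuous_image[OF continuous_on_subset[OF holomorphic_on_imp_continuous_on[OF assms(1)]] compact_cball])
  then have "bounded (g ` cball 0 \<rho>)" by (rule compact_imp_bounded)
  then obtain G where G: "\<forall>x\<in>g ` cball 0 \<rho>. norm x \<le> G"
    unfolding bounded_iff by blast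
  show ?thesis
  proof (rule that[of "max G 0"])
    fix w assume "cmod w \<le> \<rho>"
    then have "g w \<in> g ` cball 0 \<rho>" by simp
    then have "cmod (g w) \<le> G" using G by blast
    then show "cmod (g w) \<le> max G 0" by simp
  qed simp
qed

abbreviation vanishing_at_boundary :: "(complex \<Rightarrow> real) \<Rightarrow> bool" where
  "vanishing_at_boundary W \<equiv> \<forall>\<epsilon>>0. \<exists>r<1. \<forall>z. r < cmod z \<and> cmod z < 1 \<longrightarrow> W z < \<epsilon>"

lemma continuous_on_log_weighted:
  assumes "g holomorphic_on disc"
  shows "continuous_on disc (log_weighted e g)"
proof -
  have "0 < 1 - (cmod z)\<^sup>2" "(cmod z)\<^sup>2 \<noteq> 1" if "z \<in> disc" for z
    using disc_weight_pos[OF that] by auto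
  then show ?thesis
    by (intro continuous_intros holomorphic_on_imp_continuous_on[OF assms]) (auto simp: field_simps)
qed

lemma vanishing_at_boundary_imp_bdd_above:
  assumes "continuous_on disc W" and "vanishing_at_boundary W"
  shows "bdd_above (W ` disc)"
proof -
  obtain r where "r < 1" and outer: "\<And>z. r < cmod z \<Longrightarrow> cmod z < 1 \<Longrightarrow> W z < 1"
    using assms(2)[rule_format, of 1] by auto
  have "cball 0 r \<subseteq> disc" using \<open>r < 1\<close> by auto
  then have "compact (W ` cball 0 r)"
    by (rule compact_continuous_image[OF continuous_on_subset[OF assms(1)] compact_cball])
  then have "bdd_above (W ` cball 0 r)"
    by (intro bounded_imp_bdd_above compact_imp_bounded)
  then obtain M where inner: "\<And>z. z \<in> cball 0 r \<Longrightarrow> W z \<le> M"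
    unfolding bdd_above_def by blast
  show ?thesis
  proof (rule bdd_aboveI2[where M = "max M 1"])
    fix z :: complex assume "z \<in> disc"
    show "W z \<le> max M 1"
    proof (cases "cmod z \<le> r")
      case True
      then show ?thesis using inner[of z] by simp
    next
      case False
      then have "W z < 1" using outer[of z] \<open>z \<in> disc\<close> by simp
      then show ?thesis by simp
    qed
  qed
qed

text \<open>The norm limit provided by compactness must vanish: convergence in \<open>\<B>\<^sup>\<beta>\<close> implies
  pointwise convergence.\<close>

lemma compact_bloch_op_subseq_norm_tendsto_0:
  fixes F :: "nat \<Rightarrow> complex \<Rightarrow> complex"
  assumes compact: "compact_bloch_op \<alpha> \<beta> T" and "\<beta> \<ge> 0"
    and F: "\<And>k. F k \<in> bloch \<alpha>" "\<And>k. bloch_norm \<alpha> (F k) \<le> 1"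
    and null: "\<And>z. z \<in> disc \<Longrightarrow> (\<lambda>k. T (F k) z) \<longlonglongrightarrow> 0"
  obtains r where "strict_mono r" "(\<lambda>k. bloch_norm \<beta> (T (F (r k)))) \<longlonglongrightarrow> 0"
proof -
  obtain r h where r: "strict_mono r" and h: "h \<in> bloch \<beta>"
    and lim: "(\<lambda>k. bloch_norm \<beta> (\<lambda>z. T (F (r k)) z - h z)) \<longlonglongrightarrow> 0"
    using compact F unfolding compact_bloch_op_def by blast
  have diff_in_bloch: "(\<lambda>z. T (F (r k)) z - h z) \<in> bloch \<beta>" for k
    using compact F h unfolding compact_bloch_op_def by (blast intro: bloch_diff)
  have h_0: "h z = 0" if z: "z \<in> disc" for z
  proof -
    have "(\<lambda>k. T (F (r k)) z - h z) \<longlonglongrightarrow> 0"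
    proof (rule Lim_null_comparison)
      show "\<forall>\<^sub>F k in sequentially. norm (T (F (r k)) z - h z)
              \<le> bloch_norm \<beta> (\<lambda>z. T (F (r k)) z - h z) * (1 + 1 / (1 - (cmod z)\<^sup>2) powr \<beta>)"
        using norm_le_bloch_norm[OF diff_in_bloch \<open>\<beta> \<ge> 0\<close> z] by simp
      show "(\<lambda>k. bloch_norm \<beta> (\<lambda>z. T (F (r k)) z - h z) * (1 + 1 / (1 - (cmod z)\<^sup>2) powr \<beta>))
              \<longlonglongrightarrow> 0"
        using tendsto_mult_left_zero[OF lim] by simp
    qed
    moreover have "(\<lambda>k. T (F (r k)) z) \<longlonglongrightarrow> 0"
      using LIMSEQ_subseq_LIMSEQ[OF null[OF z] r] by (simp add: comp_def)
    ultimately have "(\<lambda>k. h z) \<longlonglongrightarrow> 0"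
      using tendsto_diff by fastforce
    then show ?thesis by (simp add: LIMSEQ_const_iff)
  qed
  have "bloch_norm \<beta> (\<lambda>z. T (F (r k)) z - h z) = bloch_norm \<beta> (T (F (r k)))" for k
    by (rule bloch_norm_cong) (simp add: h_0)
  with lim r show ?thesis using that by simp
qed

lemma intop_mult_bloch_test_tendsto_0:
  assumes g: "g holomorphic_on disc" and a: "\<And>k. a k \<in> disc"
    and a_boundary: "filterlim (\<lambda>k. log_weight (a k)) at_top sequentially"
    and z: "z \<in> disc"
  shows "(\<lambda>k. intop_mult n g (bloch_test (a k)) z) \<longlonglongrightarrow> 0"
proof -
  define \<rho> where "\<rho> = cmod z"
  have "\<rho> < 1" using z by (simp add: \<rho>_def)
  define K where "K = (2 * ln 2 + pi - ln (1 - \<rho>))\<^sup>2"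
  obtain G where G: "\<And>w. cmod w \<le> \<rho> \<Longrightarrow> cmod (g w) \<le> G"
    using holomorphic_on_disc_bounded_on_cball[OF g \<open>\<rho> < 1\<close>] by blast
  define B where "B k = K * G / 50 / log_weight (a k)" for k
  have bound: "cmod (intop_mult n g (bloch_test (a k)) z) \<le> B k" for k
  proof (rule norm_intop_funpow_le[OF \<open>\<rho> < 1\<close>])
    show "(\<lambda>w. bloch_test (a k) w * g w) holomorphic_on disc"
      using holomorphic_on_bloch_test[OF a] g by (auto intro!: holomorphic_intros)
    fix w assume w: "cmod w \<le> \<rho>"
    have "cmod (bloch_test (a k) w) \<le> K / (50 * log_weight (a k))"
      unfolding K_def by (rule norm_bloch_test_le[OF \<open>\<rho> < 1\<close> a w])
    moreover have "0 \<le> K / (50 * log_weight (a k))"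
      using log_weight_pos[OF a, of k] unfolding K_def by simp
    ultimately have "cmod (bloch_test (a k) w) * cmod (g w) \<le> K / (50 * log_weight (a k)) * G"
      using G[OF w] by (intro mult_mono) simp_all
    then show "cmod (bloch_test (a k) w * g w) \<le> B k"
      by (simp add: B_def norm_mult)
  qed (simp add: \<rho>_def)
  have "B \<longlonglongrightarrow> 0"
    unfolding B_def
    by (intro tendsto_divide_0[OF tendsto_const] filterlim_at_top_imp_at_infinity a_boundary)
  then show ?thesis
    by (rule Lim_null_comparison[OF always_eventually, rotated]) (simp add: bound)
qed

lemma not_vanishing_at_boundary_obtains_seq:
  assumes "\<not> vanishing_at_boundary W"
  obtains \<epsilon> a where "\<epsilon> > 0" "\<And>k. a k \<in> disc" "\<And>k. \<epsilon> \<le> W (a k)"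
    and "filterlim (\<lambda>k. log_weight (a k)) at_top sequentially"
proof -
  obtain \<epsilon> where "\<epsilon> > 0" and large: "\<forall>r<1. \<exists>z. r < cmod z \<and> cmod z < 1 \<and> \<not> W z < \<epsilon>"
    using assms by blast
  have "\<forall>k::nat. \<exists>z. 1 - exp (- real k) < cmod z \<and> cmod z < 1 \<and> \<epsilon> \<le> W z"
  proof
    fix k :: nat
    show "\<exists>z. 1 - exp (- real k) < cmod z \<and> cmod z < 1 \<and> \<epsilon> \<le> W z"
      using large[rule_format, of "1 - exp (- real k)"] by (auto simp: not_less)
  qed
  then obtain a where a_props: "\<And>k. 1 - exp (- real k) < cmod (a k) \<and> cmod (a k) < 1 \<and> \<epsilon> \<le> W (a k)"
    by metis
  then have a: "a k \<in> disc" for k by simp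
  have "real k \<le> log_weight (a k)" for k
  proof -
    have "1 - cmod (a k) < exp (- real k)" "0 < 1 - cmod (a k)"
      using a_props[of k] by auto
    then have "ln (1 - cmod (a k)) < - real k"
      using ln_less_cancel_iff[of "1 - cmod (a k)" "exp (- real k)"] by simp
    then show ?thesis using neg_ln_le_log_weight[OF a[of k]] by linarith
  qed
  then have "filterlim (\<lambda>k. log_weight (a k)) at_top sequentially"
    by (intro filterlim_at_top_mono[OF filterlim_real_sequentially]) auto
  moreover have "\<epsilon> \<le> W (a k)" for k using a_props by blast
  ultimately show ?thesis by (intro that[OF \<open>\<epsilon> > 0\<close> a])
qed

lemma compact_bloch_op_intop_mult_imp_vanishing:
  assumes "\<beta> > 0" "n > 0" and g: "g holomorphic_on disc"
    and compact: "compact_bloch_op 1 \<beta> (intop_mult n g)"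
  shows "vanishing_at_boundary (log_weighted (real n + \<beta> - 1) g)"
proof (rule ccontr)
  let ?W = "log_weighted (real n + \<beta> - 1) g"
  assume "\<not> vanishing_at_boundary ?W"
  then obtain \<epsilon> a where "\<epsilon> > 0" and a: "\<And>k. a k \<in> disc" and a_large: "\<And>k. \<epsilon> \<le> ?W (a k)"
    and "filterlim (\<lambda>k. log_weight (a k)) at_top sequentially"
    by (rule not_vanishing_at_boundary_obtains_seq) blast
  then have null: "\<And>z. z \<in> disc \<Longrightarrow> (\<lambda>k. intop_mult n g (bloch_test (a k)) z) \<longlonglongrightarrow> 0"
    by (intro intop_mult_bloch_test_tendsto_0[OF g a])
  obtain r where norm_null: "(\<lambda>k. bloch_norm \<beta> (intop_mult n g (bloch_test (a (r k))))) \<longlonglongrightarrow> 0"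
    by (rule compact_bloch_op_subseq_norm_tendsto_0[where F = "\<lambda>k. bloch_test (a k)",
          OF compact less_imp_le[OF \<open>\<beta> > 0\<close>] bloch_test_in_bloch[OF a]
          bloch_norm_bloch_test_le[OF a] null])
  obtain C where "C > 0" and test_bound: "\<And>a. a \<in> disc \<Longrightarrow> intop_mult n g (bloch_test a) \<in> bloch \<beta> \<Longrightarrow>
      ?W a \<le> C * bloch_norm \<beta> (intop_mult n g (bloch_test a))"
    using log_weighted_le_bloch_norm_intop_mult_bloch_test[OF assms(1-3)] by blast
  have "\<forall>\<^sub>F k in sequentially. bloch_norm \<beta> (intop_mult n g (bloch_test (a (r k)))) < \<epsilon> / C"
    using order_tendstoD(2)[OF norm_null] \<open>\<epsilon> > 0\<close> \<open>C > 0\<close> by simp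
  then obtain k where "bloch_norm \<beta> (intop_mult n g (bloch_test (a (r k)))) < \<epsilon> / C"
    by (auto simp: eventually_sequentially)
  then have "C * bloch_norm \<beta> (intop_mult n g (bloch_test (a (r k)))) < \<epsilon>"
    using \<open>C > 0\<close> by (simp add: less_divide_eq mult.commute)
  moreover have "intop_mult n g (bloch_test (a (r k))) \<in> bloch \<beta>"
    using compact bloch_test_in_bloch[OF a] unfolding compact_bloch_op_def by blast
  ultimately show False
    using test_bound[OF a] a_large[of "r k"] by fastforce
qed

lemma bloch_unit_norm_le_log_weight:
  assumes "f \<in> bloch 1" "bloch_norm 1 f \<le> 1" "z \<in> disc"
  shows "cmod (f z) \<le> log_weight z / ln 2"
proof -
  have "cmod (f z) \<le> bloch_norm 1 f * log_weight z / ln 2"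
    by (rule norm_le_bloch_norm_log_weight[OF assms(1,3)])
  also have "\<dots> \<le> log_weight z / ln 2"
    using assms(2) log_weight_pos[OF assms(3)] by (simp add: divide_right_mono mult_left_le_one_le)
  finally show ?thesis .
qed

lemma bloch_unit_ball_Montel:
  fixes F :: "nat \<Rightarrow> complex \<Rightarrow> complex"
  assumes F: "\<And>k. F k \<in> bloch 1" "\<And>k. bloch_norm 1 (F k) \<le> 1"
  obtains r F_lim where "strict_mono r" "F_lim holomorphic_on disc"
    and "\<And>z. z \<in> disc \<Longrightarrow> cmod (F_lim z) \<le> log_weight z / ln 2"
    and "\<And>k z. z \<in> disc \<Longrightarrow> cmod ((F \<circ> r) k z - F_lim z) \<le> 2 / ln 2 * log_weight z"
    and "\<And>K. compact K \<Longrightarrow> K \<subseteq> disc \<Longrightarrow> uniform_limit K (F \<circ> r) F_lim sequentially"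
proof -
  define \<H> where "\<H> = {f. f holomorphic_on disc \<and> (\<forall>z\<in>disc. cmod (f z) \<le> log_weight z / ln 2)}"
  have locally_bounded: "\<exists>B. \<forall>h\<in>\<H>. \<forall>z\<in>K. cmod (h z) \<le> B" if "compact K" "K \<subseteq> disc" for K
  proof (cases "K = {}")
    case False
    then obtain z0 where "z0 \<in> K" and z0_max: "\<And>z. z \<in> K \<Longrightarrow> cmod z \<le> cmod z0"
      using continuous_attains_sup[OF \<open>compact K\<close> False continuous_on_norm_id] by blast
    then have "z0 \<in> disc" using \<open>K \<subseteq> disc\<close> by auto
    have "cmod (h z) \<le> log_weight z0 / ln 2" if "h \<in> \<H>" "z \<in> K" for h z
    proof -
      have "cmod (h z) \<le> log_weight z / ln 2" using that \<open>K \<subseteq> disc\<close> by (auto simp: \<H>_def)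
      also have "\<dots> \<le> log_weight z0 / ln 2"
        using log_weight_mono[OF \<open>z0 \<in> disc\<close> z0_max[OF \<open>z \<in> K\<close>]] by (simp add: divide_right_mono)
      finally show ?thesis .
    qed
    then show ?thesis by blast
  qed simp
  have holo: "\<And>h. h \<in> \<H> \<Longrightarrow> h holomorphic_on disc" by (simp add: \<H>_def)
  have "range F \<subseteq> \<H>"
    using F bloch_unit_norm_le_log_weight by (auto simp: \<H>_def bloch_def)
  obtain F_lim r where F_lim: "F_lim holomorphic_on disc" and "strict_mono r"
    and pointwise: "\<And>z. z \<in> disc \<Longrightarrow> (\<lambda>k. F (r k) z) \<longlonglongrightarrow> F_lim z"
    and unif: "\<And>K. compact K \<Longrightarrow> K \<subseteq> disc \<Longrightarrow> uniform_limit K (F \<circ> r) F_lim sequentially"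
    using Montel[OF open_ball holo locally_bounded \<open>range F \<subseteq> \<H>\<close>] by blast
  have F_lim_le: "cmod (F_lim z) \<le> log_weight z / ln 2" if "z \<in> disc" for z
  proof (rule Lim_norm_ubound[OF trivial_limit_sequentially pointwise[OF that]])
    show "\<forall>\<^sub>F k in sequentially. norm (F (r k) z) \<le> log_weight z / ln 2"
      using F bloch_unit_norm_le_log_weight that by (intro always_eventually) blast
  qed
  have growth: "cmod ((F \<circ> r) k z - F_lim z) \<le> 2 / ln 2 * log_weight z" if "z \<in> disc" for k z
  proof -
    have "cmod (F (r k) z) \<le> log_weight z / ln 2"
      using bloch_unit_norm_le_log_weight[OF _ _ that] F by blast
    then have "cmod (F (r k) z - F_lim z) \<le> log_weight z / ln 2 + log_weight z / ln 2"
      using norm_triangle_ineq4[of "F (r k) z" "F_lim z"] F_lim_le[OF that] by linarith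
    then show ?thesis by simp
  qed
  show ?thesis by (rule that[OF \<open>strict_mono r\<close> F_lim F_lim_le growth unif])
qed

lemma eventually_weighted_norm_mult_le:
  fixes F :: "nat \<Rightarrow> complex \<Rightarrow> complex"
  assumes g: "g holomorphic_on disc" and vanishing: "vanishing_at_boundary (log_weighted e g)"
    and "e \<ge> 0" "c \<ge> 0" "\<epsilon> > 0"
    and growth: "\<And>k z. z \<in> disc \<Longrightarrow> cmod (F k z - F_lim z) \<le> c * log_weight z"
    and unif: "\<And>K. compact K \<Longrightarrow> K \<subseteq> disc \<Longrightarrow> uniform_limit K F F_lim sequentially"
  shows "\<forall>\<^sub>F k in sequentially. \<forall>w\<in>disc.
           (1 - (cmod w)\<^sup>2) powr e * cmod ((F k w - F_lim w) * g w) \<le> \<epsilon>"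
proof -
  obtain r where "r < 1"
    and outer: "\<And>z. r < cmod z \<Longrightarrow> cmod z < 1 \<Longrightarrow> log_weighted e g z < \<epsilon> / (c + 1)"
    using vanishing[rule_format, of "\<epsilon> / (c + 1)"] \<open>\<epsilon> > 0\<close> \<open>c \<ge> 0\<close> by auto
  obtain G where "0 \<le> G" and G: "\<And>w. cmod w \<le> r \<Longrightarrow> cmod (g w) \<le> G"
    using holomorphic_on_disc_bounded_on_cball[OF g \<open>r < 1\<close>] by blast
  have "cball 0 r \<subseteq> disc" using \<open>r < 1\<close> by auto
  have "\<forall>\<^sub>F k in sequentially. \<forall>w\<in>cball 0 r. dist ((F k) w) (F_lim w) < \<epsilon> / (G + 1)"
    using unif[OF compact_cball \<open>cball 0 r \<subseteq> disc\<close>] \<open>\<epsilon> > 0\<close> \<open>0 \<le> G\<close>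
    unfolding uniform_limit_iff by simp
  then show ?thesis
  proof (rule eventually_mono, intro ballI)
    fix k w assume close: "\<forall>w\<in>cball 0 r. dist (F k w) (F_lim w) < \<epsilon> / (G + 1)" and w: "w \<in> disc"
    show "(1 - (cmod w)\<^sup>2) powr e * cmod ((F k w - F_lim w) * g w) \<le> \<epsilon>"
    proof (cases "cmod w \<le> r")
      case True
      have "(1 - (cmod w)\<^sup>2) powr e \<le> 1"
        using \<open>e \<ge> 0\<close> disc_weight_pos[OF w] by (intro powr_le1) auto
      moreover have "cmod ((F k w - F_lim w) * g w) \<le> \<epsilon> / (G + 1) * G"
        unfolding norm_mult using close True G[OF True] \<open>0 \<le> G\<close> \<open>\<epsilon> > 0\<close>
        by (intro mult_mono) (auto simp: dist_norm less_imp_le)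
      moreover have "\<epsilon> / (G + 1) * G \<le> \<epsilon>"
        using \<open>\<epsilon> > 0\<close> \<open>0 \<le> G\<close> by (simp add: field_simps)
      ultimately show ?thesis
        by (meson mult_left_le_one_le norm_ge_zero order_trans powr_ge_zero)
    next
      case False
      then have "log_weighted e g w \<le> \<epsilon> / (c + 1)"
        using outer[of w] w by simp
      then have "(1 - (cmod w)\<^sup>2) powr e * cmod ((F k w - F_lim w) * g w) \<le> c * (\<epsilon> / (c + 1))"
        using growth[OF w] \<open>c \<ge> 0\<close> by (intro weighted_norm_mult_le)
      also have "\<dots> \<le> \<epsilon>"
        using \<open>\<epsilon> > 0\<close> \<open>c \<ge> 0\<close> by (simp add: field_simps)
      finally show ?thesis .
    qed
  qed
qed

lemma tendsto_0_if_eventually_le: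
  fixes X :: "'a \<Rightarrow> real"
  assumes "\<And>k. 0 \<le> X k" and "\<And>\<epsilon>. \<epsilon> > 0 \<Longrightarrow> \<forall>\<^sub>F k in F. X k \<le> \<epsilon>"
  shows "(X \<longlongrightarrow> 0) F"
proof (rule order_tendstoI)
  fix a :: real assume "a < 0"
  then show "\<forall>\<^sub>F k in F. a < X k"
    using assms(1) by (intro always_eventually) (meson less_le_trans)
next
  fix b :: real assume "b > 0"
  then have "\<forall>\<^sub>F k in F. X k \<le> b / 2" by (intro assms(2)) simp
  then show "\<forall>\<^sub>F k in F. X k < b"
    by (rule eventually_mono) (use \<open>b > 0\<close> in simp)
qed

lemma bloch_norm_intop_mult_diff_le:
  assumes "\<beta> > 0" "n > 0" and g: "g holomorphic_on disc"
  obtains C where "C > 0"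
    and "\<And>f\<^sub>1 f\<^sub>2 M. f\<^sub>1 holomorphic_on disc \<Longrightarrow> f\<^sub>2 holomorphic_on disc \<Longrightarrow>
           \<forall>w\<in>disc. (1 - (cmod w)\<^sup>2) powr (real n + \<beta> - 1) * cmod ((f\<^sub>1 w - f\<^sub>2 w) * g w) \<le> M \<Longrightarrow>
           bloch_norm \<beta> (\<lambda>z. intop_mult n g f\<^sub>1 z - intop_mult n g f\<^sub>2 z) \<le> C * M"
proof -
  obtain C where "C > 0" and bloch_bound: "\<And>H M. H holomorphic_on disc \<Longrightarrow>
     (\<forall>w\<in>disc. (1 - (cmod w)\<^sup>2) powr (real n + \<beta> - 1) * cmod (H w) \<le> M) \<Longrightarrow>
     (intop ^^ n) H \<in> bloch \<beta> \<and> bloch_norm \<beta> ((intop ^^ n) H) \<le> C * M"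
    using intop_funpow_bloch_norm_le[OF assms(1,2)] by blast
  show ?thesis
  proof (rule that[OF \<open>C > 0\<close>])
    fix f\<^sub>1 f\<^sub>2 M assume f: "f\<^sub>1 holomorphic_on disc" "f\<^sub>2 holomorphic_on disc"
      and bound: "\<forall>w\<in>disc. (1 - (cmod w)\<^sup>2) powr (real n + \<beta> - 1) * cmod ((f\<^sub>1 w - f\<^sub>2 w) * g w) \<le> M"
    have "intop_mult n g f\<^sub>1 z - intop_mult n g f\<^sub>2 z = (intop ^^ n) (\<lambda>w. (f\<^sub>1 w - f\<^sub>2 w) * g w) z"
      if "z \<in> disc" for z
    proof -
      have "(intop ^^ n) (\<lambda>w. f\<^sub>1 w * g w - f\<^sub>2 w * g w) z = intop_mult n g f\<^sub>1 z - intop_mult n g f\<^sub>2 z"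
        using f g that by (intro intop_funpow_diff) (auto intro!: holomorphic_intros)
      then show ?thesis by (simp add: left_diff_distrib)
    qed
    then have "bloch_norm \<beta> (\<lambda>z. intop_mult n g f\<^sub>1 z - intop_mult n g f\<^sub>2 z)
                 = bloch_norm \<beta> ((intop ^^ n) (\<lambda>w. (f\<^sub>1 w - f\<^sub>2 w) * g w))"
      by (rule bloch_norm_cong)
    also have "\<dots> \<le> C * M"
    proof -
      have "(\<lambda>w. (f\<^sub>1 w - f\<^sub>2 w) * g w) holomorphic_on disc"
        using f g by (intro holomorphic_intros)
      then show ?thesis using bloch_bound bound by blast
    qed
    finally show "bloch_norm \<beta> (\<lambda>z. intop_mult n g f\<^sub>1 z - intop_mult n g f\<^sub>2 z) \<le> C * M" .
  qed
qed

lemma intop_mult_bloch_unit_ball_subseq_converges: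
  fixes F :: "nat \<Rightarrow> complex \<Rightarrow> complex"
  assumes "\<beta> > 0" "n > 0" and g: "g holomorphic_on disc"
    and vanishing: "vanishing_at_boundary (log_weighted (real n + \<beta> - 1) g)"
    and F_unit: "\<And>k. F k \<in> bloch 1" "\<And>k. bloch_norm 1 (F k) \<le> 1"
  shows "\<exists>r h. strict_mono r \<and> h \<in> bloch \<beta> \<and>
           (\<lambda>k. bloch_norm \<beta> (\<lambda>z. intop_mult n g (F (r k)) z - h z)) \<longlonglongrightarrow> 0"
proof -
  let ?e = "real n + \<beta> - 1"
  have "?e \<ge> 0" using assms(1,2) by (simp add: Suc_le_eq)
  have bdd: "bdd_above (log_weighted ?e g ` disc)"
    by (rule vanishing_at_boundary_imp_bdd_above[OF continuous_on_log_weighted[OF g] vanishing])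
  then obtain B where B: "\<And>z. z \<in> disc \<Longrightarrow> log_weighted ?e g z \<le> B"
    unfolding bdd_above_def by blast
  have maps_into: "\<And>f. f \<in> bloch 1 \<Longrightarrow> intop_mult n g f \<in> bloch \<beta>"
    using bounded_bloch_op_intop_mult[OF assms(1-3) bdd] unfolding bounded_bloch_op_def by blast
  obtain C where "C > 0" and diff_le: "\<And>f\<^sub>1 f\<^sub>2 M. f\<^sub>1 holomorphic_on disc \<Longrightarrow> f\<^sub>2 holomorphic_on disc \<Longrightarrow>
      \<forall>w\<in>disc. (1 - (cmod w)\<^sup>2) powr ?e * cmod ((f\<^sub>1 w - f\<^sub>2 w) * g w) \<le> M \<Longrightarrow>
      bloch_norm \<beta> (\<lambda>z. intop_mult n g f\<^sub>1 z - intop_mult n g f\<^sub>2 z) \<le> C * M"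
    using bloch_norm_intop_mult_diff_le[OF assms(1-3)] by blast
  obtain r F_lim where "strict_mono r" and F_lim: "F_lim holomorphic_on disc"
    and F_lim_le: "\<And>z. z \<in> disc \<Longrightarrow> cmod (F_lim z) \<le> log_weight z / ln 2"
    and growth: "\<And>k z. z \<in> disc \<Longrightarrow> cmod ((F \<circ> r) k z - F_lim z) \<le> 2 / ln 2 * log_weight z"
    and unif: "\<And>K. compact K \<Longrightarrow> K \<subseteq> disc \<Longrightarrow> uniform_limit K (F \<circ> r) F_lim sequentially"
    by (rule bloch_unit_ball_Montel[of F, OF F_unit]) blast
  have F_holo: "F k holomorphic_on disc" for k using F_unit by (simp add: bloch_def)
  have "\<forall>w\<in>disc. (1 - (cmod w)\<^sup>2) powr ?e * cmod (F_lim w * g w) \<le> 1 / ln 2 * B"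
    using F_lim_le B by (intro ballI weighted_norm_mult_le) auto
  then have h: "intop_mult n g F_lim \<in> bloch \<beta>"
    using intop_funpow_bloch_norm_le[OF assms(1,2)] F_lim g by (blast intro: holomorphic_intros)
  have "(\<lambda>k. bloch_norm \<beta> (\<lambda>z. intop_mult n g (F (r k)) z - intop_mult n g F_lim z)) \<longlonglongrightarrow> 0"
  proof (rule tendsto_0_if_eventually_le)
    show "0 \<le> bloch_norm \<beta> (\<lambda>z. intop_mult n g (F (r k)) z - intop_mult n g F_lim z)" for k
      using F_unit by (intro bloch_norm_nonneg bloch_diff maps_into h)
    fix \<epsilon> :: real assume "\<epsilon> > 0"
    have "0 \<le> 2 / ln (2::real)" "\<epsilon> / C > 0" using \<open>\<epsilon> > 0\<close> \<open>C > 0\<close> by simp_all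
    then have "\<forall>\<^sub>F k in sequentially. \<forall>w\<in>disc.
                 (1 - (cmod w)\<^sup>2) powr ?e * cmod (((F \<circ> r) k w - F_lim w) * g w) \<le> \<epsilon> / C"
      by (rule eventually_weighted_norm_mult_le[OF g vanishing \<open>?e \<ge> 0\<close> _ _ growth unif])
    then show "\<forall>\<^sub>F k in sequentially. bloch_norm \<beta> (\<lambda>z. intop_mult n g (F (r k)) z - intop_mult n g F_lim z) \<le> \<epsilon>"
    proof (rule eventually_mono)
      fix k assume "\<forall>w\<in>disc. (1 - (cmod w)\<^sup>2) powr ?e * cmod (((F \<circ> r) k w - F_lim w) * g w) \<le> \<epsilon> / C"
      then have "bloch_norm \<beta> (\<lambda>z. intop_mult n g (F (r k)) z - intop_mult n g F_lim z) \<le> C * (\<epsilon> / C)"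
        by (intro diff_le[OF F_holo F_lim]) (simp add: comp_def)
      then show "bloch_norm \<beta> (\<lambda>z. intop_mult n g (F (r k)) z - intop_mult n g F_lim z) \<le> \<epsilon>"
        using \<open>C > 0\<close> by simp
    qed
  qed
  then show ?thesis using \<open>strict_mono r\<close> h by blast
qed

lemma vanishing_imp_compact_bloch_op_intop_mult:
  assumes "\<beta> > 0" "n > 0" and g: "g holomorphic_on disc"
    and vanishing: "vanishing_at_boundary (log_weighted (real n + \<beta> - 1) g)"
  shows "compact_bloch_op 1 \<beta> (intop_mult n g)"
proof -
  have "bdd_above (log_weighted (real n + \<beta> - 1) g ` disc)"
    by (rule vanishing_at_boundary_imp_bdd_above[OF continuous_on_log_weighted[OF g] vanishing])
  then have "intop_mult n g f \<in> bloch \<beta>" if "f \<in> bloch 1" for f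
    using bounded_bloch_op_intop_mult[OF assms(1-3)] that unfolding bounded_bloch_op_def by blast
  then show ?thesis
    using intop_mult_bloch_unit_ball_subseq_converges[OF assms] unfolding compact_bloch_op_def by blast
qed

theorem proposition4p1:
  fixes \<beta> :: real and n :: nat and g :: "complex \<Rightarrow> complex"
  assumes "\<beta> > 0" and "n > 0" and "g holomorphic_on disc"
  shows "(bounded_bloch_op 1 \<beta> (\<lambda>f. (intop ^^ n) (\<lambda>z. f z * g z)) \<longleftrightarrow>
            bdd_above ((\<lambda>z. (1 - (cmod z)\<^sup>2) powr (real n + \<beta> - 1)
                          * ln (2 / (1 - (cmod z)\<^sup>2)) * cmod (g z)) ` disc))
       \<and> (compact_bloch_op 1 \<beta> (\<lambda>f. (intop ^^ n) (\<lambda>z. f z * g z)) \<longleftrightarrow>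
            (\<forall>\<epsilon>>0. \<exists>r<1. \<forall>z. r < cmod z \<and> cmod z < 1 \<longrightarrow>
               (1 - (cmod z)\<^sup>2) powr (real n + \<beta> - 1)
                 * ln (2 / (1 - (cmod z)\<^sup>2)) * cmod (g z) < \<epsilon>))"
proof (intro conjI iffI)
  show "bounded_bloch_op 1 \<beta> (intop_mult n g)" if "bdd_above (log_weighted (real n + \<beta> - 1) g ` disc)"
    using bounded_bloch_op_intop_mult[OF assms that] .
  show "bdd_above (log_weighted (real n + \<beta> - 1) g ` disc)" if "bounded_bloch_op 1 \<beta> (intop_mult n g)"
    using bounded_bloch_op_intop_mult_imp_bdd_above[OF assms that] .
  show "compact_bloch_op 1 \<beta> (intop_mult n g)" if "vanishing_at_boundary (log_weighted (real n + \<beta> - 1) g)"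
    using vanishing_imp_compact_bloch_op_intop_mult[OF assms that] .
  show "vanishing_at_boundary (log_weighted (real n + \<beta> - 1) g)" if "compact_bloch_op 1 \<beta> (intop_mult n g)"
    using compact_bloch_op_intop_mult_imp_vanishing[OF assms that] .
qed

end
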